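(* Let $\alpha<1$ and $\beta>1$, and define $v(q)=(1+|q|)^\alpha$ for $q<0$ and $v(q)=(1+|q|)^\beta$ for $q>0$. Then for every $t\ge0$ and every smooth compactly supported function $f$ on $\mathbb{R}^2$, with $q=r-t$, $$\Big\|\frac{v(q)^{1/2}}{1+|q|}f\Big\|_{L^2(\mathbb{R}^2)}\lesssim\|v(q)^{1/2}\partial_rf\|_{L^2(\mathbb{R}^2)},$$ where the implicit constant depends only on $\alpha,\beta$.
   Context: $(r,\theta)$ are polar coordinates on $\mathbb{R}^2$ and $\partial_r$ is the radial derivative. *)

theory Defs
  imports "HOL-Analysis.Analysis"
begin

fun Ck :: "nat \<Rightarrow> ('a::euclidean_space \<Rightarrow> real) \<Rightarrow> bool" where
  "Ck 0 f = continuous_on UNIV f"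
| "Ck (Suc n) f = ((\<forall>x. f differentiable (at x)) \<and> continuous_on UNIV f \<and>
      (\<forall>i\<in>Basis. Ck n (\<lambda>x. frechet_derivative f (at x) i)))"

definition smooth :: "('a::euclidean_space \<Rightarrow> real) \<Rightarrow> bool" where
  "smooth f \<longleftrightarrow> (\<forall>n. Ck n f)"

definition compact_support :: "('a::euclidean_space \<Rightarrow> real) \<Rightarrow> bool" where
  "compact_support f \<longleftrightarrow> compact (closure {x. f x \<noteq> 0})"

text \<open>Radial derivative d_r f (x) = Df(x) (x/|x|); at the origin (a null set) it is 0.\<close>
definition radial_deriv :: "('a::euclidean_space \<Rightarrow> real) \<Rightarrow> 'a \<Rightarrow> real" where
  "radial_deriv f x = frechet_derivative f (at x) (x /\<^sub>R norm x)"

text \<open>The weight v(q).  At q = 0 both branches give 1.\<close>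
definition weight_v :: "real \<Rightarrow> real \<Rightarrow> real \<Rightarrow> real" where
  "weight_v \<alpha> \<beta> q = (if q < 0 then (1 + \<bar>q\<bar>) powr \<alpha> else (1 + \<bar>q\<bar>) powr \<beta>)"

end

theory Submission
  imports Defs
begin

text \<open>Put \<open>q = r - t\<close>, \<open>\<psi>(q) = v(q) / (1 + \<bar>q\<bar>)\<close>, \<open>m = min (1 - \<alpha>) (\<beta> - 1) 1\<close> and
  \<open>K(r) = \<psi>(r - t) / (m (1 + r))\<close>. Since \<open>\<alpha> - 1 < 0 < \<beta> - 1\<close>, \<open>\<psi>(r - t)\<close> increases in \<open>r\<close>
  on both sides of \<open>r = t\<close>, and this makes the divergence \<open>r K'(r) + 2 K(r)\<close> of the plane
  vector field \<open>K(\<bar>x\<bar>) x\<close> at least \<open>v(q) / (1 + \<bar>q\<bar>)\<^sup>2\<close>. Integrating \<open>f\<^sup>2\<close> against this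
  divergence and integrating by parts bounds the square of the left-hand side by
  \<open>-2 \<integral> r K f \<partial>\<^sub>r f\<close>; as \<open>r K \<le> \<psi> / m\<close> and \<open>\<psi>\<^sup>2 = v \<cdot> v / (1 + \<bar>q\<bar>)\<^sup>2\<close>, AM-GM absorbs half of it,
  which leaves the inequality with constant \<open>2 / m\<close>. The integration by parts is Euler's identity
  \<open>\<integral> d/d\<mu> G(\<mu> x)|\<^sub>\<mu>\<^sub>=\<^sub>1 dx = -n \<integral> G\<close> for \<open>G = K(\<bar>x\<bar>) f\<^sup>2\<close>, obtained by differentiating
  \<open>\<integral> G(\<mu> x) dx = \<mu>\<^sup>-\<^sup>n \<integral> G\<close> under the integral sign.\<close>

lemma integrable_bounded_vanishing_outside_ball:
  fixes h :: "'a::euclidean_space \<Rightarrow> real"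
  assumes "h \<in> borel_measurable lborel"
    and bound: "\<And>x. norm x < \<rho> \<Longrightarrow> \<bar>h x\<bar> \<le> M"
    and zero: "\<And>x. \<rho> \<le> norm x \<Longrightarrow> h x = 0"
  shows "integrable lborel h"
proof (rule Bochner_Integration.integrable_bound)
  show "integrable lborel (\<lambda>x. indicator (cball 0 \<rho>) x *\<^sub>R max M 0)"
    by (rule borel_integrable_compact) auto
  show "AE x in lborel. norm (h x) \<le> norm (indicator (cball 0 \<rho>) x *\<^sub>R max M 0)"
  proof (rule AE_I2)
    fix x
    show "norm (h x) \<le> norm (indicator (cball 0 \<rho>) x *\<^sub>R max M 0)"
      using bound[of x] zero[of x] by (cases "norm x < \<rho>") (auto simp: indicator_def)
  qed
qed fact

lemma abs_mult_le:
  fixes a b :: real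
  shows "\<bar>a\<bar> \<le> A \<Longrightarrow> \<bar>b\<bar> \<le> B \<Longrightarrow> \<bar>a * b\<bar> \<le> A * B"
  by (simp add: abs_mult mult_mono')

lemma integrable_continuous_mult_vanishing:
  fixes w h :: "'a::euclidean_space \<Rightarrow> real"
  assumes "continuous_on UNIV w" and "h \<in> borel_measurable lborel"
    and "\<And>x. \<bar>h x\<bar> \<le> B" and "\<And>x. \<rho> \<le> norm x \<Longrightarrow> h x = 0"
  shows "integrable lborel (\<lambda>x. w x * h x)"
proof -
  have "continuous_on (cball 0 \<rho>) w" using assms(1) by (rule continuous_on_subset) simp
  then obtain Bw where Bw: "\<And>x. x \<in> cball 0 \<rho> \<Longrightarrow> norm (w x) \<le> Bw"
    using continuous_on_compact_bound[OF compact_cball] by metis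
  show ?thesis
  proof (rule integrable_bounded_vanishing_outside_ball)
    have [measurable]: "w \<in> borel_measurable lborel"
      using assms(1) by (simp add: borel_measurable_continuous_onI)
    show "(\<lambda>x. w x * h x) \<in> borel_measurable lborel" using assms(2) by measurable
    fix x :: 'a assume "norm x < \<rho>"
    then show "\<bar>w x * h x\<bar> \<le> Bw * B" using Bw[of x] assms(3)[of x] by (intro abs_mult_le) auto
  qed (simp add: assms(4))
qed

lemma integral_lborel_scaleR:
  fixes f :: "'a::euclidean_space \<Rightarrow> real"
  assumes "c \<noteq> 0" and "integrable lborel f"
  shows "(\<integral>x. f x \<partial>lborel) = \<bar>c\<bar> ^ DIM('a) * (\<integral>x. f (c *\<^sub>R x) \<partial>lborel)"
  using assms borel_measurable_integrable[OF assms(2)]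
  by (subst lborel_affine[OF assms(1), of 0]) (simp add: integral_density integral_distr)

lemma difference_quotient_tendsto:
  fixes \<phi> :: "real \<Rightarrow> real"
  assumes "(\<phi> has_real_derivative D) (at a)" and "h \<longlonglongrightarrow> 0" and "\<And>n. h n \<noteq> 0"
  shows "(\<lambda>n. (\<phi> (a + h n) - \<phi> a) / h n) \<longlonglongrightarrow> D"
proof -
  have "((\<lambda>y. (\<phi> y - \<phi> a) / (y - a)) \<longlongrightarrow> D) (at a)"
    using assms(1) by (simp add: has_field_derivative_iff)
  moreover have "filterlim (\<lambda>n. a + h n) (at a) sequentially"
    using assms(2,3) tendsto_add[OF tendsto_const assms(2), of a]
    by (intro filterlim_atI) (simp_all add: always_eventually)
  ultimately have "(\<lambda>n. (\<phi> (a + h n) - \<phi> a) / ((a + h n) - a)) \<longlonglongrightarrow> D"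
    by (rule filterlim_compose)
  then show ?thesis by simp
qed

lemma abs_diff_le_of_deriv_bound:
  fixes g g' :: "real \<Rightarrow> real"
  assumes "finite S" and "a \<le> b" and "continuous_on {a..b} g"
    and "\<And>\<nu>. \<nu> \<in> {a<..<b} - S \<Longrightarrow> (g has_real_derivative g' \<nu>) (at \<nu>)"
    and bound: "\<And>\<nu>. \<nu> \<in> {a..b} \<Longrightarrow> \<bar>g' \<nu>\<bar> \<le> M"
  shows "\<bar>g b - g a\<bar> \<le> M * (b - a)"
proof -
  have "(g' has_integral (g b - g a)) {a..b}"
    using assms(4)
    by (intro fundamental_theorem_of_calculus_interior_strong[OF assms(1,2) _ assms(3)])
       (auto simp: has_real_derivative_iff_has_vector_derivative)
  moreover have "0 \<le> M" using bound[of a] \<open>a \<le> b\<close> by auto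
  ultimately have "norm (g b - g a) \<le> M * measure lborel {a..b}"
    using bound by (intro has_integral_bound_real[OF _ assms(1)]) auto
  then show ?thesis using \<open>a \<le> b\<close> by simp
qed

lemma integrable_continuous_vanishing_outside_ball:
  fixes G :: "'a::euclidean_space \<Rightarrow> real"
  assumes "continuous_on UNIV G" and "\<And>x. \<rho> \<le> norm x \<Longrightarrow> G x = 0"
  shows "integrable lborel G"
proof -
  have "continuous_on (cball 0 \<rho>) G" using assms(1) by (rule continuous_on_subset) simp
  then obtain B where "\<And>x. x \<in> cball 0 \<rho> \<Longrightarrow> norm (G x) \<le> B"
    using continuous_on_compact_bound[OF compact_cball] by metis
  then show ?thesis
    using assms by (intro integrable_bounded_vanishing_outside_ball[where \<rho> = \<rho> and M = B])
      (auto simp: borel_measurable_continuous_onI)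
qed

lemma integral_dilation_quotient:
  fixes G :: "'a::euclidean_space \<Rightarrow> real"
  assumes G_cont: "continuous_on UNIV G" and G_zero: "\<And>x. \<rho> \<le> norm x \<Longrightarrow> G x = 0"
    and h: "0 < h"
  shows "(\<integral>x. (G ((1 + h) *\<^sub>R x) - G x) / h \<partial>lborel)
    = (inverse ((1 + h) ^ DIM('a)) - 1) / h * (\<integral>x. G x \<partial>lborel)"
proof -
  have G_int: "integrable lborel G"
    by (rule integrable_continuous_vanishing_outside_ball[OF G_cont G_zero])
  have "norm x \<le> norm ((1 + h) *\<^sub>R x)" for x :: 'a using h by (simp add: ring_distribs)
  then have "G ((1 + h) *\<^sub>R x) = 0" if "\<rho> \<le> norm x" for x
    using G_zero order_trans that by blast
  then have "integrable lborel (\<lambda>x. G ((1 + h) *\<^sub>R x))"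
    by (intro integrable_continuous_vanishing_outside_ball[where \<rho> = \<rho>]
        continuous_on_compose2[OF G_cont]) (auto intro!: continuous_intros)
  moreover have "(\<integral>x. G x \<partial>lborel) = (1 + h) ^ DIM('a) * (\<integral>x. G ((1 + h) *\<^sub>R x) \<partial>lborel)"
    using integral_lborel_scaleR[OF _ G_int, of "1 + h"] h by simp
  ultimately show ?thesis
    using G_int h by (simp add: field_simps)
qed

lemma integral_dilation_quotients_tendsto:
  fixes G Gd :: "'a::euclidean_space \<Rightarrow> real" and h :: "nat \<Rightarrow> real"
  assumes G_cont: "continuous_on UNIV G" and G_zero: "\<And>x. \<rho> \<le> norm x \<Longrightarrow> G x = 0"
    and Gd_meas: "Gd \<in> borel_measurable lborel" and N: "N \<in> null_sets lborel"
    and deriv: "\<And>x. x \<notin> N \<Longrightarrow> ((\<lambda>\<mu>. G (\<mu> *\<^sub>R x)) has_real_derivative Gd x) (at 1)"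
    and lipschitz: "\<And>x \<mu>. 1 \<le> \<mu> \<Longrightarrow> \<mu> \<le> 2 \<Longrightarrow> \<bar>G (\<mu> *\<^sub>R x) - G x\<bar> \<le> M * (\<mu> - 1)"
    and h_lim: "h \<longlonglongrightarrow> 0" and h_pos: "\<And>n. 0 < h n" and h_le: "\<And>n. h n \<le> 1"
  shows "integrable lborel Gd"
    and "(\<lambda>n. \<integral>x. (G ((1 + h n) *\<^sub>R x) - G x) / h n \<partial>lborel) \<longlonglongrightarrow> (\<integral>x. Gd x \<partial>lborel)"
proof -
  define s where "s n x = (G ((1 + h n) *\<^sub>R x) - G x) / h n" for n x
  have s_meas: "s n \<in> borel_measurable lborel" for n
  proof -
    have "continuous_on UNIV (\<lambda>x. G ((1 + h n) *\<^sub>R x))"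
      by (rule continuous_on_compose2[OF G_cont]) (auto intro!: continuous_intros)
    then have "continuous_on UNIV (s n)"
      unfolding s_def using h_pos[of n] by (intro continuous_intros G_cont) auto
    then show ?thesis by (simp add: borel_measurable_continuous_onI)
  qed
  have M: "0 \<le> M" using lipschitz[of 2 0] by simp
  have s_bound: "AE x in lborel. norm (s n x) \<le> indicator (cball 0 \<rho>) x *\<^sub>R M" for n
  proof (rule AE_I2)
    fix x
    show "norm (s n x) \<le> indicator (cball 0 \<rho>) x *\<^sub>R M"
    proof (cases "norm x \<le> \<rho>")
      case True
      have "\<bar>G ((1 + h n) *\<^sub>R x) - G x\<bar> \<le> M * h n"
        using lipschitz[of "1 + h n" x] h_pos[of n] h_le[of n] by simp
      then show ?thesis using True h_pos[of n] by (simp add: s_def abs_divide divide_le_eq)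
    next
      case False
      have "norm x \<le> norm ((1 + h n) *\<^sub>R x)" using h_pos[of n] by (simp add: ring_distribs)
      then show ?thesis using False M G_zero[of x] G_zero[of "(1 + h n) *\<^sub>R x"] by (simp add: s_def)
    qed
  qed
  have s_lim: "AE x in lborel. (\<lambda>n. s n x) \<longlonglongrightarrow> Gd x"
    using N by (rule AE_I')
      (use difference_quotient_tendsto[OF deriv h_lim] h_pos in \<open>auto simp: s_def less_imp_neq[symmetric]\<close>)
  have dominated: "integrable lborel (\<lambda>x. indicator (cball 0 \<rho>) x *\<^sub>R M)"
    by (rule borel_integrable_compact) auto
  note dc = Gd_meas s_meas dominated s_lim s_bound
  show "integrable lborel Gd" by (rule integrable_dominated_convergence[OF dc])
  show "(\<lambda>n. \<integral>x. (G ((1 + h n) *\<^sub>R x) - G x) / h n \<partial>lborel) \<longlonglongrightarrow> (\<integral>x. Gd x \<partial>lborel)"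
    using integral_dominated_convergence[OF dc] by (simp add: s_def)
qed

lemma integral_dilation_derivative:
  fixes G Gd :: "'a::euclidean_space \<Rightarrow> real"
  assumes G_cont: "continuous_on UNIV G" and G_zero: "\<And>x. \<rho> \<le> norm x \<Longrightarrow> G x = 0"
    and Gd_meas: "Gd \<in> borel_measurable lborel" and N: "N \<in> null_sets lborel"
    and deriv: "\<And>x. x \<notin> N \<Longrightarrow> ((\<lambda>\<mu>. G (\<mu> *\<^sub>R x)) has_real_derivative Gd x) (at 1)"
    and lipschitz: "\<And>x \<mu>. 1 \<le> \<mu> \<Longrightarrow> \<mu> \<le> 2 \<Longrightarrow> \<bar>G (\<mu> *\<^sub>R x) - G x\<bar> \<le> M * (\<mu> - 1)"
  shows "integrable lborel Gd" and "(\<integral>x. Gd x \<partial>lborel) = - real DIM('a) * (\<integral>x. G x \<partial>lborel)"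
proof -
  define h where "h n = 1 / real (Suc n)" for n
  have h_pos: "0 < h n" and h_le: "h n \<le> 1" for n by (auto simp: h_def field_simps)
  have h_lim: "h \<longlonglongrightarrow> 0"
    unfolding h_def by (rule LIMSEQ_inverse_real_of_nat[simplified inverse_eq_divide])
  have quotients: "integrable lborel Gd"
      "(\<lambda>n. \<integral>x. (G ((1 + h n) *\<^sub>R x) - G x) / h n \<partial>lborel) \<longlonglongrightarrow> (\<integral>x. Gd x \<partial>lborel)"
    using integral_dilation_quotients_tendsto[OF G_cont G_zero Gd_meas N deriv lipschitz h_lim h_pos h_le]
    by blast+
  show "integrable lborel Gd" by (rule quotients(1))
  have "((\<lambda>\<mu>::real. inverse (\<mu> ^ DIM('a))) has_real_derivative - real DIM('a)) (at 1)"
    by (auto intro!: derivative_eq_intros)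
  from difference_quotient_tendsto[OF this h_lim] h_pos
  have "(\<lambda>n. (inverse ((1 + h n) ^ DIM('a)) - 1) / h n) \<longlonglongrightarrow> - real DIM('a)"
    by (simp add: less_imp_neq[symmetric])
  then have "(\<lambda>n. (inverse ((1 + h n) ^ DIM('a)) - 1) / h n * (\<integral>x. G x \<partial>lborel))
      \<longlonglongrightarrow> - real DIM('a) * (\<integral>x. G x \<partial>lborel)"
    by (rule tendsto_mult[OF _ tendsto_const])
  then have "(\<lambda>n. \<integral>x. (G ((1 + h n) *\<^sub>R x) - G x) / h n \<partial>lborel)
      \<longlonglongrightarrow> - real DIM('a) * (\<integral>x. G x \<partial>lborel)"
    by (simp only: integral_dilation_quotient[OF G_cont G_zero h_pos])
  with quotients(2) show "(\<integral>x. Gd x \<partial>lborel) = - real DIM('a) * (\<integral>x. G x \<partial>lborel)"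
    by (rule LIMSEQ_unique)
qed

lemma frechet_derivative_expansion:
  fixes f :: "'a::euclidean_space \<Rightarrow> real"
  assumes "f differentiable (at x)"
  shows "frechet_derivative f (at x) v = (\<Sum>i\<in>Basis. (v \<bullet> i) * frechet_derivative f (at x) i)"
proof -
  have lin: "linear (frechet_derivative f (at x))" using assms by (rule linear_frechet_derivative)
  have "frechet_derivative f (at x) v = frechet_derivative f (at x) (\<Sum>i\<in>Basis. (v \<bullet> i) *\<^sub>R i)"
    by (simp add: euclidean_representation)
  also have "\<dots> = (\<Sum>i\<in>Basis. (v \<bullet> i) * frechet_derivative f (at x) i)"
    by (simp add: linear_sum[OF lin] linear_scale[OF lin])
  finally show ?thesis .
qed

lemma C1_continuous_on_frechet_derivative:
  fixes f :: "'a::euclidean_space \<Rightarrow> real"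
  assumes "Ck 1 f" and "continuous_on UNIV g"
  shows "continuous_on UNIV (\<lambda>x. frechet_derivative f (at x) (g x))"
  using assms by (simp add: frechet_derivative_expansion) (intro continuous_intros; simp)

lemma C1_frechet_derivative_bound:
  fixes f :: "'a::euclidean_space \<Rightarrow> real"
  assumes "Ck 1 f" and "compact S"
  obtains B where "\<And>y v. y \<in> S \<Longrightarrow> \<bar>frechet_derivative f (at y) v\<bar> \<le> B * norm v"
proof -
  define P where "P y = (\<Sum>i\<in>Basis. \<bar>frechet_derivative f (at y) i\<bar>)" for y
  have "continuous_on S P"
  proof -
    have "continuous_on UNIV (\<lambda>y. frechet_derivative f (at y) i)" if "i \<in> Basis" for i
      using assms(1) that by simp
    then have "continuous_on UNIV P" unfolding P_def by (intro continuous_on_sum continuous_on_rabs) auto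
    then show ?thesis by (rule continuous_on_subset) simp
  qed
  then obtain B where B: "\<And>y. y \<in> S \<Longrightarrow> norm (P y) \<le> B"
    using continuous_on_compact_bound[OF assms(2)] by metis
  have "\<bar>frechet_derivative f (at y) v\<bar> \<le> B * norm v" if "y \<in> S" for y v
  proof -
    have "\<bar>frechet_derivative f (at y) v\<bar> \<le> (\<Sum>i\<in>Basis. \<bar>(v \<bullet> i) * frechet_derivative f (at y) i\<bar>)"
      using assms(1) frechet_derivative_expansion[of f y v] by (simp add: sum_abs)
    also have "\<dots> \<le> (\<Sum>i\<in>Basis. norm v * \<bar>frechet_derivative f (at y) i\<bar>)"
      by (intro sum_mono) (simp add: abs_mult Basis_le_norm mult_right_mono)
    also have "\<dots> = norm v * P y" unfolding P_def by (rule sum_distrib_left[symmetric])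
    also have "\<dots> \<le> B * norm v" using B[OF that] by (subst mult.commute, intro mult_right_mono) auto
    finally show ?thesis .
  qed
  then show ?thesis by (rule that)
qed

lemma compact_support_vanishes_outside_ball:
  fixes f :: "'a::euclidean_space \<Rightarrow> real"
  assumes "compact_support f"
  obtains \<rho> where "0 < \<rho>" and "\<And>x. \<rho> \<le> norm x \<Longrightarrow> f x = 0"
    and "\<And>x. \<rho> \<le> norm x \<Longrightarrow> frechet_derivative f (at x) = (\<lambda>_. 0)"
proof -
  let ?S = "closure {x. f x \<noteq> 0}"
  have "bounded ?S" using assms compact_imp_bounded unfolding compact_support_def by blast
  then obtain \<rho> where \<rho>: "0 < \<rho>" "?S \<subseteq> ball 0 \<rho>" using bounded_subset_ballD by blast
  have zero: "f y = 0" if "y \<in> - ?S" for y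
    using that closure_subset[of "{x. f x \<noteq> 0}"] by auto
  have vanish: "f x = 0 \<and> frechet_derivative f (at x) = (\<lambda>_. 0)" if "\<rho> \<le> norm x" for x
  proof -
    have x: "x \<in> - ?S" using that \<rho>(2) by (metis ComplI mem_ball_0 not_less subsetD)
    have "(f has_derivative (\<lambda>_. 0)) (at x)"
      by (rule has_derivative_transform_within_open[OF has_derivative_const[of 0] _ x])
         (rule open_Compl[OF closed_closure], rule sym, erule zero)
    then have "(\<lambda>_. 0) = frechet_derivative f (at x)" by (rule frechet_derivative_at)
    with zero[OF x] show ?thesis by simp
  qed
  show ?thesis by (rule that[OF \<rho>(1)]) (simp_all add: vanish)
qed

lemma C1_compact_support_bounds:
  fixes f :: "'a::euclidean_space \<Rightarrow> real"
  assumes "Ck 1 f" and "compact_support f"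
  obtains \<rho> B where "0 < \<rho>" and "\<And>x. \<rho> \<le> norm x \<Longrightarrow> f x = 0"
    and "\<And>x. \<rho> \<le> norm x \<Longrightarrow> frechet_derivative f (at x) = (\<lambda>_. 0)"
    and "\<And>x. \<bar>f x\<bar> \<le> B" and "\<And>x v. \<bar>frechet_derivative f (at x) v\<bar> \<le> B * norm v"
proof -
  obtain \<rho> where \<rho>: "0 < \<rho>" and f0: "\<And>x. \<rho> \<le> norm x \<Longrightarrow> f x = 0"
    and Df0: "\<And>x. \<rho> \<le> norm x \<Longrightarrow> frechet_derivative f (at x) = (\<lambda>_. 0)"
    using compact_support_vanishes_outside_ball[OF assms(2)] by blast
  have "continuous_on (cball 0 \<rho>) f" using assms(1) by (auto intro: continuous_on_subset)
  then obtain B1 where B1: "\<And>x. x \<in> cball 0 \<rho> \<Longrightarrow> norm (f x) \<le> B1"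
    using continuous_on_compact_bound[OF compact_cball] by metis
  obtain B2 where B2: "\<And>x v. x \<in> cball 0 \<rho> \<Longrightarrow> \<bar>frechet_derivative f (at x) v\<bar> \<le> B2 * norm v"
    using C1_frechet_derivative_bound[OF assms(1) compact_cball] by blast
  have "0 \<le> B1" using B1[of 0] \<rho> by (auto intro: order_trans[OF norm_ge_zero])
  then have "\<bar>f x\<bar> \<le> max B1 B2" for x
    using B1[of x] f0[of x] by (cases "norm x \<le> \<rho>") auto
  moreover have "\<bar>frechet_derivative f (at x) v\<bar> \<le> max B1 B2 * norm v" for x v
  proof (cases "norm x \<le> \<rho>")
    case True
    have "B2 * norm v \<le> max B1 B2 * norm v" by (intro mult_right_mono) auto
    then show ?thesis using B2[of x v] True by simp
  qed (use Df0[of x] \<open>0 \<le> B1\<close> in auto)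
  ultimately show ?thesis using that[OF \<rho> f0 Df0] by blast
qed

lemma frechet_derivative_along_ray:
  fixes f :: "'a::euclidean_space \<Rightarrow> real"
  assumes "f differentiable (at (\<nu> *\<^sub>R x))"
  shows "((\<lambda>\<mu>. f (\<mu> *\<^sub>R x)) has_real_derivative frechet_derivative f (at (\<nu> *\<^sub>R x)) x) (at \<nu>)"
proof -
  have "((\<lambda>\<mu>. \<mu> *\<^sub>R x) has_derivative (\<lambda>h. h *\<^sub>R x)) (at \<nu>)"
    by (auto intro!: derivative_eq_intros)
  from has_derivative_compose[OF this assms[unfolded frechet_derivative_works]]
  have "((\<lambda>\<mu>. f (\<mu> *\<^sub>R x)) has_derivative (\<lambda>h. frechet_derivative f (at (\<nu> *\<^sub>R x)) (h *\<^sub>R x))) (at \<nu>)" .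
  moreover have "frechet_derivative f (at (\<nu> *\<^sub>R x)) (h *\<^sub>R x) = h * frechet_derivative f (at (\<nu> *\<^sub>R x)) x" for h
    using linear_frechet_derivative[OF assms] by (simp add: linear_scale)
  ultimately show ?thesis
    by (simp add: has_field_derivative_def mult.commute[of _ "frechet_derivative f (at (\<nu> *\<^sub>R x)) x"])
qed

lemma frechet_derivative_position_eq:
  fixes f :: "'a::euclidean_space \<Rightarrow> real"
  assumes "f differentiable (at x)"
  shows "frechet_derivative f (at x) x = norm x * radial_deriv f x"
  using linear_frechet_derivative[OF assms]
  by (cases "x = 0") (simp_all add: radial_deriv_def linear_0 linear_scale)

lemma radial_deriv_bound:
  fixes f :: "'a::euclidean_space \<Rightarrow> real"
  assumes "\<And>v. \<bar>frechet_derivative f (at x) v\<bar> \<le> B * norm v"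
  shows "\<bar>radial_deriv f x\<bar> \<le> B"
proof -
  have "0 \<le> B" using assms[of "SOME i. i \<in> Basis"] by (simp add: SOME_Basis)
  then show ?thesis using assms[of "x /\<^sub>R norm x"] by (cases "x = 0") (auto simp: radial_deriv_def)
qed

lemma C1_radial_deriv_measurable:
  fixes f :: "'a::euclidean_space \<Rightarrow> real"
  assumes "Ck 1 f"
  shows "radial_deriv f \<in> borel_measurable lborel"
proof -
  have "continuous_on UNIV (\<lambda>x. frechet_derivative f (at x) x)"
    using C1_continuous_on_frechet_derivative[OF assms continuous_on_id] .
  then have "(\<lambda>x. frechet_derivative f (at x) x / norm x) \<in> borel_measurable lborel"
    by (intro borel_measurable_divide) (auto simp: borel_measurable_continuous_onI)
  moreover have "radial_deriv f = (\<lambda>x. frechet_derivative f (at x) x / norm x)"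
  proof
    fix x
    have "f differentiable (at x)" using assms by simp
    note position_eq = frechet_derivative_position_eq[OF this]
      and zero = linear_0[OF linear_frechet_derivative[OF this]]
    show "radial_deriv f x = frechet_derivative f (at x) x / norm x"
      using position_eq zero by (cases "x = 0") (simp_all add: radial_deriv_def)
  qed
  ultimately show ?thesis by simp
qed

locale radial_multiplier =
  fixes K K' :: "real \<Rightarrow> real" and c :: real
  assumes K_cont: "continuous_on {0..} K"
    and K_deriv: "\<And>r. 0 < r \<Longrightarrow> r \<noteq> c \<Longrightarrow> (K has_real_derivative K' r) (at r)"
    and K'_measurable: "K' \<in> borel_measurable borel"
    and K'_bounded: "\<And>R. \<exists>B. \<forall>r\<in>{0..R}. \<bar>K' r\<bar> \<le> B"
begin

lemma K_norm_continuous: "continuous_on UNIV (\<lambda>x::'a::real_normed_vector. K (norm x))"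
  by (rule continuous_on_compose2[OF K_cont continuous_on_norm_id]) auto

lemma K_bounds:
  obtains BK BK' where "\<And>r. r \<in> {0..R} \<Longrightarrow> \<bar>K r\<bar> \<le> BK" and "\<And>r. r \<in> {0..R} \<Longrightarrow> \<bar>K' r\<bar> \<le> BK'"
proof -
  have "continuous_on {0..R} K" using K_cont by (rule continuous_on_subset) auto
  then obtain BK where "\<And>r. r \<in> {0..R} \<Longrightarrow> norm (K r) \<le> BK"
    using continuous_on_compact_bound[OF compact_Icc] by metis
  moreover obtain BK' where "\<forall>r\<in>{0..R}. \<bar>K' r\<bar> \<le> BK'" using K'_bounded by blast
  ultimately show ?thesis by (intro that) auto
qed

lemma has_real_derivative_along_ray:
  fixes f :: "'a::euclidean_space \<Rightarrow> real"
  assumes f: "\<And>y. f differentiable (at y)" and x: "x \<noteq> 0" and \<nu>: "0 < \<nu>" "\<nu> * norm x \<noteq> c"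
  shows "((\<lambda>\<mu>. K (norm (\<mu> *\<^sub>R x)) * (f (\<mu> *\<^sub>R x))\<^sup>2) has_real_derivative
      norm x * K' (\<nu> * norm x) * (f (\<nu> *\<^sub>R x))\<^sup>2
      + 2 * K (\<nu> * norm x) * f (\<nu> *\<^sub>R x) * frechet_derivative f (at (\<nu> *\<^sub>R x)) x) (at \<nu>)"
proof -
  have "((\<lambda>\<mu>. \<mu> * norm x) has_real_derivative norm x) (at \<nu>)"
    by (auto intro!: derivative_eq_intros)
  from DERIV_chain2[OF K_deriv this] have K_ray:
    "((\<lambda>\<mu>. K (\<mu> * norm x)) has_real_derivative K' (\<nu> * norm x) * norm x) (at \<nu>)"
    using x \<nu> by simp
  have f_ray: "((\<lambda>\<mu>. (f (\<mu> *\<^sub>R x))\<^sup>2) has_real_derivative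
      of_nat 2 * (frechet_derivative f (at (\<nu> *\<^sub>R x)) x * f (\<nu> *\<^sub>R x) ^ (2 - Suc 0))) (at \<nu>)"
    by (rule DERIV_power[OF frechet_derivative_along_ray[OF f]])
  have "((\<lambda>\<mu>. K (\<mu> * norm x) * (f (\<mu> *\<^sub>R x))\<^sup>2) has_real_derivative
      norm x * K' (\<nu> * norm x) * (f (\<nu> *\<^sub>R x))\<^sup>2
      + 2 * K (\<nu> * norm x) * f (\<nu> *\<^sub>R x) * frechet_derivative f (at (\<nu> *\<^sub>R x)) x) (at \<nu>)"
    using DERIV_mult[OF K_ray f_ray] by (simp add: algebra_simps)
  then show ?thesis
    by (rule has_field_derivative_transform_within_open[where S = "{0<..}"]) (use \<nu> in auto)
qed

lemma dilation_lipschitz: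
  fixes f :: "'a::euclidean_space \<Rightarrow> real"
  assumes "Ck 1 f" and "compact_support f"
  obtains M where "\<And>x \<mu>. 1 \<le> \<mu> \<Longrightarrow> \<mu> \<le> 2 \<Longrightarrow>
    \<bar>K (norm (\<mu> *\<^sub>R x)) * (f (\<mu> *\<^sub>R x))\<^sup>2 - K (norm x) * (f x)\<^sup>2\<bar> \<le> M * (\<mu> - 1)"
proof -
  obtain \<rho> B where \<rho>: "0 < \<rho>" and f0: "\<And>x. \<rho> \<le> norm x \<Longrightarrow> f x = 0"
    and "\<And>x. \<rho> \<le> norm x \<Longrightarrow> frechet_derivative f (at x) = (\<lambda>_. 0)"
    and fB: "\<And>x. \<bar>f x\<bar> \<le> B" and DfB: "\<And>x v. \<bar>frechet_derivative f (at x) v\<bar> \<le> B * norm v"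
    using C1_compact_support_bounds[OF assms] by blast
  obtain BK BK' where BK: "\<And>r. r \<in> {0..2 * \<rho>} \<Longrightarrow> \<bar>K r\<bar> \<le> BK"
    and BK': "\<And>r. r \<in> {0..2 * \<rho>} \<Longrightarrow> \<bar>K' r\<bar> \<le> BK'"
    using K_bounds[of "2 * \<rho>"] by blast
  define G where "G x = K (norm x) * (f x)\<^sup>2" for x :: 'a
  define M where "M = \<rho> * BK' * B\<^sup>2 + 2 * BK * B * (B * \<rho>)"
  have f_diff: "\<And>y. f differentiable (at y)" using assms(1) by simp
  have "continuous_on UNIV f" using assms(1) by simp
  then have G_cont: "continuous_on UNIV G"
    unfolding G_def by (intro continuous_on_mult K_norm_continuous continuous_on_power)
  have nonneg: "0 \<le> B" "0 \<le> BK" "0 \<le> BK'"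
    using fB[of 0] BK[of 0] BK'[of 0] \<rho> by (auto intro: order_trans[OF abs_ge_zero])
  then have M: "0 \<le> M" unfolding M_def using \<rho> by simp
  have "\<bar>G (\<mu> *\<^sub>R x) - G x\<bar> \<le> M * (\<mu> - 1)" if \<mu>: "1 \<le> \<mu>" "\<mu> \<le> 2" for x \<mu>
  proof (cases "x = 0 \<or> \<rho> \<le> norm x")
    case True
    moreover have "norm x \<le> norm (\<mu> *\<^sub>R x)" using \<mu> by (simp add: mult_le_cancel_right1)
    ultimately show ?thesis using M \<mu> f0[of x] f0[of "\<mu> *\<^sub>R x"] by (auto simp: G_def)
  next
    case False
    then have x: "x \<noteq> 0" "norm x < \<rho>" by auto
    define g' where "g' \<nu> = norm x * K' (\<nu> * norm x) * (f (\<nu> *\<^sub>R x))\<^sup>2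
      + 2 * K (\<nu> * norm x) * f (\<nu> *\<^sub>R x) * frechet_derivative f (at (\<nu> *\<^sub>R x)) x" for \<nu>
    have "\<bar>G (\<mu> *\<^sub>R x) - G (1 *\<^sub>R x)\<bar> \<le> M * (\<mu> - 1)"
    proof (rule abs_diff_le_of_deriv_bound[where S = "{c / norm x}" and g' = g'])
      show "continuous_on {1..\<mu>} (\<lambda>\<nu>. G (\<nu> *\<^sub>R x))"
        by (rule continuous_on_compose2[OF G_cont]) (auto intro!: continuous_intros)
      fix \<nu> assume "\<nu> \<in> {1<..<\<mu>} - {c / norm x}"
      then show "((\<lambda>\<nu>. G (\<nu> *\<^sub>R x)) has_real_derivative g' \<nu>) (at \<nu>)"
        unfolding G_def g'_def using x
        by (intro has_real_derivative_along_ray f_diff) (auto simp: field_simps)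
    next
      fix \<nu> assume \<nu>: "\<nu> \<in> {1..\<mu>}"
      then have r: "\<nu> * norm x \<in> {0..2 * \<rho>}" using x \<mu> by (auto intro: mult_mono)
      have "\<bar>norm x * K' (\<nu> * norm x) * (f (\<nu> *\<^sub>R x))\<^sup>2\<bar> \<le> \<rho> * BK' * B\<^sup>2"
        unfolding power2_eq_square using x BK'[OF r] fB by (intro abs_mult_le) auto
      moreover have "\<bar>2 * K (\<nu> * norm x) * f (\<nu> *\<^sub>R x) * frechet_derivative f (at (\<nu> *\<^sub>R x)) x\<bar>
          \<le> 2 * BK * B * (B * \<rho>)"
        using x BK[OF r] fB DfB[of _ x] nonneg
        by (intro abs_mult_le order_trans[OF DfB] mult_left_mono) auto
      ultimately show "\<bar>g' \<nu>\<bar> \<le> M" unfolding g'_def M_def by linarith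
    qed (use \<mu> in auto)
    then show ?thesis by simp
  qed
  then show ?thesis unfolding G_def by (rule that)
qed

lemma K_norm_measurable [measurable]: "(\<lambda>x::'a::euclidean_space. K (norm x)) \<in> borel_measurable lborel"
  using borel_measurable_continuous_onI[OF K_norm_continuous] by simp

lemma K'_norm_measurable [measurable]: "(\<lambda>x::'a::euclidean_space. K' (norm x)) \<in> borel_measurable lborel"
  using K'_measurable by measurable

lemma divergence_terms_integrable:
  fixes f :: "'a::euclidean_space \<Rightarrow> real"
  assumes "Ck 1 f" and "compact_support f"
  shows "integrable lborel (\<lambda>x. (norm x * K' (norm x) + DIM('a) * K (norm x)) * (f x)\<^sup>2)"
    and "integrable lborel (\<lambda>x. norm x * K (norm x) * f x * radial_deriv f x)"
proof -
  obtain \<rho> B where "0 < \<rho>" and f0: "\<And>x. \<rho> \<le> norm x \<Longrightarrow> f x = 0"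
    and "\<And>x. \<rho> \<le> norm x \<Longrightarrow> frechet_derivative f (at x) = (\<lambda>_. 0)"
    and fB: "\<And>x. \<bar>f x\<bar> \<le> B" and DfB: "\<And>x v. \<bar>frechet_derivative f (at x) v\<bar> \<le> B * norm v"
    using C1_compact_support_bounds[OF assms] by blast
  obtain BK BK' where BK: "\<And>r. r \<in> {0..\<rho>} \<Longrightarrow> \<bar>K r\<bar> \<le> BK"
    and BK': "\<And>r. r \<in> {0..\<rho>} \<Longrightarrow> \<bar>K' r\<bar> \<le> BK'"
    using K_bounds[of \<rho>] by blast
  have "continuous_on UNIV f" using assms(1) by simp
  then have [measurable]: "f \<in> borel_measurable lborel" by (simp add: borel_measurable_continuous_onI)
  have [measurable]: "radial_deriv f \<in> borel_measurable lborel"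
    by (rule C1_radial_deriv_measurable[OF assms(1)])
  have r: "norm x \<in> {0..\<rho>}" if "norm x < \<rho>" for x :: 'a using that by simp
  show "integrable lborel (\<lambda>x. (norm x * K' (norm x) + DIM('a) * K (norm x)) * (f x)\<^sup>2)"
  proof (rule integrable_bounded_vanishing_outside_ball)
    fix x :: 'a assume x: "norm x < \<rho>"
    have "\<bar>norm x * K' (norm x) + DIM('a) * K (norm x)\<bar> \<le> \<rho> * BK' + DIM('a) * BK"
      using abs_mult_le[of "norm x" \<rho> "K' (norm x)" BK'] abs_mult_le[of "real DIM('a)" "DIM('a)" "K (norm x)" BK]
        x BK'[OF r[OF x]] BK[OF r[OF x]] by simp
    then show "\<bar>(norm x * K' (norm x) + DIM('a) * K (norm x)) * (f x)\<^sup>2\<bar> \<le> (\<rho> * BK' + DIM('a) * BK) * B\<^sup>2"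
      unfolding power2_eq_square using fB by (intro abs_mult_le) auto
  qed (simp_all add: f0)
  show "integrable lborel (\<lambda>x. norm x * K (norm x) * f x * radial_deriv f x)"
  proof (rule integrable_bounded_vanishing_outside_ball)
    fix x :: 'a assume x: "norm x < \<rho>"
    show "\<bar>norm x * K (norm x) * f x * radial_deriv f x\<bar> \<le> \<rho> * BK * B * B"
      using x BK[OF r[OF x]] fB radial_deriv_bound[OF DfB] by (intro abs_mult_le) auto
  qed (simp_all add: f0)
qed

text \<open>Integration by parts against the vector field \<open>K (norm x) *\<^sub>R x\<close>, whose divergence is
  \<open>r K' r + n K r\<close> with \<open>r = norm x\<close>; it is the dilation identity for \<open>K (norm x) * (f x)\<^sup>2\<close>.\<close>
lemma integral_divergence_identity:
  fixes f :: "'a::euclidean_space \<Rightarrow> real"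
  assumes "Ck 1 f" and "compact_support f"
  shows "(\<integral>x. (norm x * K' (norm x) + DIM('a) * K (norm x)) * (f x)\<^sup>2 \<partial>lborel)
    = - 2 * (\<integral>x. norm x * K (norm x) * f x * radial_deriv f x \<partial>lborel)"
proof -
  obtain \<rho> where f0: "\<And>x. \<rho> \<le> norm x \<Longrightarrow> f x = 0"
    using compact_support_vanishes_outside_ball[OF assms(2)] by metis
  obtain M where lipschitz: "\<And>x \<mu>. 1 \<le> \<mu> \<Longrightarrow> \<mu> \<le> 2 \<Longrightarrow>
      \<bar>K (norm (\<mu> *\<^sub>R x)) * (f (\<mu> *\<^sub>R x))\<^sup>2 - K (norm x) * (f x)\<^sup>2\<bar> \<le> M * (\<mu> - 1)"
    using dilation_lipschitz[OF assms] by blast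
  have f_diff: "\<And>y. f differentiable (at y)" and f_cont: "continuous_on UNIV f"
    using assms(1) by simp_all
  have [measurable]: "f \<in> borel_measurable lborel"
      "(\<lambda>x. frechet_derivative f (at x) x) \<in> borel_measurable lborel"
    using f_cont C1_continuous_on_frechet_derivative[OF assms(1) continuous_on_id]
    by (simp_all add: borel_measurable_continuous_onI)
  define G where "G x = K (norm x) * (f x)\<^sup>2" for x
  define Gd where "Gd x = norm x * K' (norm x) * (f x)\<^sup>2
    + 2 * K (norm x) * f x * frechet_derivative f (at x) x" for x
  define N where "N = {0::'a} \<union> sphere 0 c"
  have sphere_null: "sphere (0::'a) c \<in> null_sets lborel"
    using negligible_sphere[of "0::'a" c]
    by (auto simp: null_sets_completion_iff negligible_iff_null_sets negligible_convex_frontier)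
  have N: "N \<in> null_sets lborel"
    unfolding N_def by (rule null_sets.Un[OF countable_imp_null_set_lborel sphere_null]) simp
  have G_cont: "continuous_on UNIV G"
    unfolding G_def by (intro continuous_on_mult K_norm_continuous continuous_on_power f_cont)
  have G_zero: "\<And>x. \<rho> \<le> norm x \<Longrightarrow> G x = 0" by (simp add: G_def f0)
  have Gd_meas: "Gd \<in> borel_measurable lborel" unfolding Gd_def by measurable
  have G_deriv: "((\<lambda>\<mu>. G (\<mu> *\<^sub>R x)) has_real_derivative Gd x) (at 1)" if "x \<notin> N" for x
    using has_real_derivative_along_ray[OF f_diff, of x 1] that by (simp add: G_def Gd_def N_def)
  have G_lipschitz: "\<bar>G (\<mu> *\<^sub>R x) - G x\<bar> \<le> M * (\<mu> - 1)" if "1 \<le> \<mu>" "\<mu> \<le> 2" for x \<mu>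
    unfolding G_def by (rule lipschitz[OF that])
  note dilation = integral_dilation_derivative[OF G_cont G_zero Gd_meas N G_deriv G_lipschitz]
  have "(norm x * K' (norm x) + DIM('a) * K (norm x)) * (f x)\<^sup>2
      = Gd x + DIM('a) * G x - 2 * (norm x * K (norm x) * f x * radial_deriv f x)" for x
    by (simp add: Gd_def G_def frechet_derivative_position_eq[OF f_diff] algebra_simps)
  then show ?thesis
    using dilation integrable_continuous_vanishing_outside_ball[OF G_cont G_zero]
      divergence_terms_integrable(2)[OF assms] by simp
qed

end

definition weight_gap :: "real \<Rightarrow> real \<Rightarrow> real" where
  "weight_gap \<alpha> \<beta> = min (min (1 - \<alpha>) (\<beta> - 1)) 1"

definition weight_w :: "real \<Rightarrow> real \<Rightarrow> real \<Rightarrow> real" where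
  "weight_w \<alpha> \<beta> q = weight_v \<alpha> \<beta> q / (1 + \<bar>q\<bar>)\<^sup>2"

definition weight_psi :: "real \<Rightarrow> real \<Rightarrow> real \<Rightarrow> real" where
  "weight_psi \<alpha> \<beta> q = (if q < 0 then (1 + \<bar>q\<bar>) powr (\<alpha> - 1) else (1 + \<bar>q\<bar>) powr (\<beta> - 1))"

definition multiplier :: "real \<Rightarrow> real \<Rightarrow> real \<Rightarrow> real \<Rightarrow> real" where
  "multiplier \<alpha> \<beta> t r = weight_psi \<alpha> \<beta> (r - t) / (weight_gap \<alpha> \<beta> * (1 + r))"

definition multiplier_deriv :: "real \<Rightarrow> real \<Rightarrow> real \<Rightarrow> real \<Rightarrow> real" where
  "multiplier_deriv \<alpha> \<beta> t r = (if r < t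
     then (1 - \<alpha>) * (1 + t - r) powr (\<alpha> - 2) / (1 + r) - (1 + t - r) powr (\<alpha> - 1) / (1 + r)\<^sup>2
     else (\<beta> - 1) * (1 + r - t) powr (\<beta> - 2) / (1 + r) - (1 + r - t) powr (\<beta> - 1) / (1 + r)\<^sup>2)
     / weight_gap \<alpha> \<beta>"

lemma weight_gap_pos: "\<alpha> < 1 \<Longrightarrow> 1 < \<beta> \<Longrightarrow> 0 < weight_gap \<alpha> \<beta>"
  by (simp add: weight_gap_def)

lemma weight_v_nonneg: "0 \<le> weight_v \<alpha> \<beta> q"
  by (simp add: weight_v_def)

lemma weight_w_nonneg: "0 \<le> weight_w \<alpha> \<beta> q"
  by (simp add: weight_w_def weight_v_nonneg)

lemma weight_psi_nonneg: "0 \<le> weight_psi \<alpha> \<beta> q"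
  by (simp add: weight_psi_def)

lemma weight_psi_sq: "(weight_psi \<alpha> \<beta> q)\<^sup>2 = weight_w \<alpha> \<beta> q * weight_v \<alpha> \<beta> q"
proof -
  have "u powr (a - 1) = u powr a / u" if "0 < u" for u a :: real
    using that by (simp add: powr_diff)
  then show ?thesis
    by (simp add: weight_psi_def weight_w_def weight_v_def power2_eq_square)
qed

lemma continuous_on_weight_v: "continuous_on UNIV (weight_v \<alpha> \<beta>)"
proof -
  have "weight_v \<alpha> \<beta> = (\<lambda>q. (1 + max (- q) 0) powr \<alpha> * (1 + max q 0) powr \<beta>)"
    by (auto simp: weight_v_def fun_eq_iff)
  then show ?thesis by (auto intro!: continuous_intros)
qed

lemma continuous_on_weight_w: "continuous_on UNIV (weight_w \<alpha> \<beta>)"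
  unfolding weight_w_def[abs_def]
  by (intro continuous_on_divide continuous_on_weight_v continuous_intros) auto

lemma continuous_on_weight_psi: "continuous_on UNIV (weight_psi \<alpha> \<beta>)"
proof -
  have "weight_psi \<alpha> \<beta> = (\<lambda>q. (1 + max (- q) 0) powr (\<alpha> - 1) * (1 + max q 0) powr (\<beta> - 1))"
    by (auto simp: weight_psi_def fun_eq_iff)
  then show ?thesis by (auto intro!: continuous_intros)
qed

lemma has_real_derivative_powr_quotient:
  fixes \<sigma> a t r :: real
  assumes "0 < 1 + \<sigma> * (r - t)" and "0 < 1 + r"
  shows "((\<lambda>r. (1 + \<sigma> * (r - t)) powr (a - 1) / (1 + r)) has_real_derivative
    \<sigma> * (a - 1) * (1 + \<sigma> * (r - t)) powr (a - 2) / (1 + r) - (1 + \<sigma> * (r - t)) powr (a - 1) / (1 + r)\<^sup>2) (at r)"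
proof -
  define D where "D = \<sigma> * (a - 1) * (1 + \<sigma> * (r - t)) powr (a - 2)"
  define P where "P = (1 + \<sigma> * (r - t)) powr (a - 1)"
  have "((\<lambda>r. (1 + \<sigma> * (r - t)) powr (a - 1)) has_real_derivative D) (at r)"
    unfolding D_def using assms(1) by (auto intro!: derivative_eq_intros simp: algebra_simps)
  moreover have "((\<lambda>r. 1 + r) has_real_derivative 1) (at r)"
    by (auto intro!: derivative_eq_intros)
  moreover have "1 + r \<noteq> 0" using assms(2) by simp
  ultimately have "((\<lambda>r. (1 + \<sigma> * (r - t)) powr (a - 1) / (1 + r)) has_real_derivative
      (D * (1 + r) - P * 1) / ((1 + r) * (1 + r))) (at r)"
    unfolding P_def by (rule DERIV_divide)
  moreover have "(D * (1 + r) - P * 1) / ((1 + r) * (1 + r)) = D / (1 + r) - P / (1 + r)\<^sup>2"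
    using \<open>1 + r \<noteq> 0\<close> by (simp add: power2_eq_square diff_divide_distrib)
  ultimately show ?thesis unfolding D_def P_def by simp
qed

lemma multiplier_has_derivative:
  assumes "\<alpha> < 1" and "1 < \<beta>" and "0 < r" and "r \<noteq> t"
  shows "(multiplier \<alpha> \<beta> t has_real_derivative multiplier_deriv \<alpha> \<beta> t r) (at r)"
proof (cases "r < t")
  case True
  have "((\<lambda>r. (1 + (-1) * (r - t)) powr (\<alpha> - 1) / (1 + r) / weight_gap \<alpha> \<beta>) has_real_derivative
      multiplier_deriv \<alpha> \<beta> t r) (at r)"
    using DERIV_cdivide[OF has_real_derivative_powr_quotient[of "-1" r t \<alpha>], of "weight_gap \<alpha> \<beta>"]
      True assms(3) by (simp add: multiplier_deriv_def add_diff_eq)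
  then show ?thesis
  proof (rule has_field_derivative_transform_within_open[where S = "{-1<..<t}"])
    fix y assume "y \<in> {-1<..<t}"
    then show "(1 + (-1) * (y - t)) powr (\<alpha> - 1) / (1 + y) / weight_gap \<alpha> \<beta> = multiplier \<alpha> \<beta> t y"
      by (simp add: multiplier_def weight_psi_def field_simps)
  qed (use True assms(3) in auto)
next
  case False
  then have "t < r" using assms(4) by simp
  have "((\<lambda>r. (1 + 1 * (r - t)) powr (\<beta> - 1) / (1 + r) / weight_gap \<alpha> \<beta>) has_real_derivative
      multiplier_deriv \<alpha> \<beta> t r) (at r)"
    using DERIV_cdivide[OF has_real_derivative_powr_quotient[of 1 r t \<beta>], of "weight_gap \<alpha> \<beta>"]
      \<open>t < r\<close> assms(3) by (simp add: multiplier_deriv_def add_diff_eq)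
  then show ?thesis
  proof (rule has_field_derivative_transform_within_open[where S = "{t<..}"])
    fix y assume "y \<in> {t<..}"
    then show "(1 + 1 * (y - t)) powr (\<beta> - 1) / (1 + y) / weight_gap \<alpha> \<beta> = multiplier \<alpha> \<beta> t y"
      by (simp add: multiplier_def weight_psi_def field_simps)
  qed (use \<open>t < r\<close> in auto)
qed

lemma continuous_on_multiplier:
  assumes "\<alpha> < 1" and "1 < \<beta>"
  shows "continuous_on {0..} (multiplier \<alpha> \<beta> t)"
  unfolding multiplier_def[abs_def] using weight_gap_pos[OF assms]
  by (intro continuous_intros continuous_on_compose2[OF continuous_on_weight_psi]) auto

lemma multiplier_deriv_measurable: "multiplier_deriv \<alpha> \<beta> t \<in> borel_measurable borel"
  unfolding multiplier_deriv_def[abs_def] by measurable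

lemma multiplier_deriv_bounded:
  assumes "\<alpha> < 1" and "1 < \<beta>"
  shows "\<exists>B. \<forall>r\<in>{0..R}. \<bar>multiplier_deriv \<alpha> \<beta> t r\<bar> \<le> B"
proof -
  note m = weight_gap_pos[OF assms]
  define D1 where "D1 r = ((1 - \<alpha>) * (1 + t - r) powr (\<alpha> - 2) / (1 + r)
    - (1 + t - r) powr (\<alpha> - 1) / (1 + r)\<^sup>2) / weight_gap \<alpha> \<beta>" for r
  define D2 where "D2 r = ((\<beta> - 1) * (1 + r - t) powr (\<beta> - 2) / (1 + r)
    - (1 + r - t) powr (\<beta> - 1) / (1 + r)\<^sup>2) / weight_gap \<alpha> \<beta>" for r
  have "continuous_on {0..t} D1" unfolding D1_def using m by (intro continuous_intros) auto
  then obtain B1 where B1: "\<And>r. r \<in> {0..t} \<Longrightarrow> norm (D1 r) \<le> B1"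
    using continuous_on_compact_bound[OF compact_Icc] by metis
  have "continuous_on {max 0 t..R} D2" unfolding D2_def using m by (intro continuous_intros) auto
  then obtain B2 where B2: "\<And>r. r \<in> {max 0 t..R} \<Longrightarrow> norm (D2 r) \<le> B2"
    using continuous_on_compact_bound[OF compact_Icc] by metis
  have "\<bar>multiplier_deriv \<alpha> \<beta> t r\<bar> \<le> max B1 B2" if "r \<in> {0..R}" for r
  proof (cases "r < t")
    case True
    then show ?thesis using that B1[of r] by (simp add: multiplier_deriv_def D1_def)
  next
    case False
    then show ?thesis using that B2[of r] by (simp add: multiplier_deriv_def D2_def)
  qed
  then show ?thesis by blast
qed

lemma radial_multiplier_weight:
  assumes "\<alpha> < 1" and "1 < \<beta>"
  shows "radial_multiplier (multiplier \<alpha> \<beta> t) (multiplier_deriv \<alpha> \<beta> t) t"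
  using assms continuous_on_multiplier multiplier_has_derivative multiplier_deriv_measurable
    multiplier_deriv_bounded
  by unfold_locales auto

lemma divergence_branch_lower_bound:
  fixes a c m r s :: real
  assumes r: "0 \<le> r" and s: "1 \<le> s" and m: "0 < m" "m \<le> c" "m \<le> 1"
  shows "s powr a / s\<^sup>2
    \<le> r * ((c * s powr (a - 2) / (1 + r) - s powr (a - 1) / (1 + r)\<^sup>2) / m)
      + 2 * (s powr (a - 1) / (m * (1 + r)))"
proof -
  define p where "p = s powr (a - 2)"
  have p: "0 < p" using s by (simp add: p_def)
  have s1: "s powr (a - 1) = s * p"
    using s powr_add[of s 1 "a - 2"] by (simp add: p_def)
  have s2: "s powr a / s\<^sup>2 = p"
    using s powr_add[of s 2 "a - 2"] by (simp add: p_def powr_numeral)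
  have r1: "0 < 1 + r" using r by simp
  have "r * ((c * p / (1 + r) - s * p / (1 + r)\<^sup>2) / m) + 2 * (s * p / (m * (1 + r)))
      = p / (m * (1 + r)\<^sup>2) * (c * r * (1 + r) + s * (2 + r))"
    using r1 m by (simp add: divide_simps) (simp add: algebra_simps power2_eq_square)
  moreover have "m * (1 + r)\<^sup>2 \<le> c * r * (1 + r) + s * (2 + r)"
  proof -
    have "m * r * (1 + r) \<le> c * r * (1 + r)" using m r by (intro mult_right_mono) auto
    moreover have "m * (1 + r) \<le> s * (2 + r)" using m s r by (intro mult_mono) auto
    ultimately show ?thesis by (simp add: power2_eq_square algebra_simps)
  qed
  then have "p / (m * (1 + r)\<^sup>2) * (m * (1 + r)\<^sup>2) \<le> p / (m * (1 + r)\<^sup>2) * (c * r * (1 + r) + s * (2 + r))"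
    using p m r1 by (intro mult_left_mono) auto
  then have "p \<le> p / (m * (1 + r)\<^sup>2) * (c * r * (1 + r) + s * (2 + r))"
    using m r1 by simp
  ultimately show ?thesis unfolding s1 s2 p_def[symmetric] by simp
qed

text \<open>In the plane the divergence of \<open>multiplier \<alpha> \<beta> t (norm x) *\<^sub>R x\<close> is
  \<open>r * multiplier_deriv \<alpha> \<beta> t r + 2 * multiplier \<alpha> \<beta> t r\<close> with \<open>r = norm x\<close>.\<close>
lemma weight_w_le_multiplier_divergence:
  assumes "\<alpha> < 1" and "1 < \<beta>" and r: "0 \<le> r"
  shows "weight_w \<alpha> \<beta> (r - t) \<le> r * multiplier_deriv \<alpha> \<beta> t r + 2 * multiplier \<alpha> \<beta> t r"
proof -
  have m: "0 < weight_gap \<alpha> \<beta>" "weight_gap \<alpha> \<beta> \<le> 1 - \<alpha>" "weight_gap \<alpha> \<beta> \<le> \<beta> - 1"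
    "weight_gap \<alpha> \<beta> \<le> 1"
    using assms by (auto simp: weight_gap_def)
  show ?thesis
  proof (cases "r < t")
    case True
    then have "1 + \<bar>r - t\<bar> = 1 + t - r" by simp
    with True divergence_branch_lower_bound[OF r, of "1 + t - r" "weight_gap \<alpha> \<beta>" "1 - \<alpha>" \<alpha>] m
    show ?thesis
      by (simp add: weight_w_def weight_v_def multiplier_deriv_def multiplier_def weight_psi_def
          add_diff_eq)
  next
    case False
    then have "1 + \<bar>r - t\<bar> = 1 + r - t" by simp
    with False divergence_branch_lower_bound[OF r, of "1 + r - t" "weight_gap \<alpha> \<beta>" "\<beta> - 1" \<beta>] m
    show ?thesis
      by (simp add: weight_w_def weight_v_def multiplier_deriv_def multiplier_def weight_psi_def
          add_diff_eq)
  qed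
qed

text \<open>Since \<open>r * multiplier \<le> weight_psi / weight_gap\<close> and \<open>weight_psi\<^sup>2 = weight_w * weight_v\<close>,
  the cross term is absorbed by AM-GM, half into the left-hand side.\<close>
lemma multiplier_cross_term_le:
  assumes "\<alpha> < 1" and "1 < \<beta>" and r: "0 \<le> r"
  shows "- 2 * (r * multiplier \<alpha> \<beta> t r * y * z)
    \<le> weight_w \<alpha> \<beta> (r - t) * y\<^sup>2 / 2 + 2 / (weight_gap \<alpha> \<beta>)\<^sup>2 * weight_v \<alpha> \<beta> (r - t) * z\<^sup>2"
proof -
  define m where "m = weight_gap \<alpha> \<beta>"
  define k where "k = r * multiplier \<alpha> \<beta> t r"
  define \<psi> where "\<psi> = weight_psi \<alpha> \<beta> (r - t)"
  define A where "A = sqrt (weight_w \<alpha> \<beta> (r - t)) * \<bar>y\<bar>"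
  define B where "B = sqrt (weight_v \<alpha> \<beta> (r - t)) * \<bar>z\<bar> / m"
  have m: "0 < m" using weight_gap_pos[OF assms(1,2)] by (simp add: m_def)
  have \<psi>: "0 \<le> \<psi> / m" using m weight_psi_nonneg by (simp add: \<psi>_def)
  have k_eq: "k = \<psi> / m * (r / (1 + r))" by (simp add: k_def multiplier_def m_def \<psi>_def)
  have le1: "r / (1 + r) \<le> 1" using r by simp
  have k0: "0 \<le> k" unfolding k_eq by (rule mult_nonneg_nonneg[OF \<psi>]) (use r in simp)
  have k1: "k \<le> \<psi> / m" unfolding k_eq by (rule mult_left_le[OF le1 \<psi>])
  have \<psi>_eq: "\<psi> = sqrt (weight_w \<alpha> \<beta> (r - t)) * sqrt (weight_v \<alpha> \<beta> (r - t))"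
  proof -
    have "\<psi> = sqrt (\<psi>\<^sup>2)" using \<psi> m by (simp add: zero_le_divide_iff)
    also have "\<dots> = sqrt (weight_w \<alpha> \<beta> (r - t) * weight_v \<alpha> \<beta> (r - t))"
      by (simp only: \<psi>_def weight_psi_sq)
    finally show ?thesis by (simp add: real_sqrt_mult)
  qed
  have "- 2 * (k * y * z) = 2 * k * (- (y * z))" by algebra
  also have "\<dots> \<le> 2 * k * (\<bar>y\<bar> * \<bar>z\<bar>)"
    using k0 abs_ge_minus_self[of "y * z"] by (intro mult_left_mono) (auto simp: abs_mult)
  also have "\<dots> \<le> 2 * (\<psi> / m) * (\<bar>y\<bar> * \<bar>z\<bar>)"
    using k1 by (intro mult_right_mono mult_left_mono) auto
  also have "\<dots> = 2 * A * B" by (simp add: A_def B_def \<psi>_eq)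
  also have "\<dots> \<le> A\<^sup>2 / 2 + 2 * B\<^sup>2"
    using sum_squares_ge_zero[of "A - 2 * B" 0] by (simp add: power2_eq_square algebra_simps)
  also have "\<dots> = weight_w \<alpha> \<beta> (r - t) * y\<^sup>2 / 2 + 2 / m\<^sup>2 * weight_v \<alpha> \<beta> (r - t) * z\<^sup>2"
    using weight_w_nonneg weight_v_nonneg by (simp add: A_def B_def power_mult_distrib power_divide)
  finally show ?thesis by (simp add: k_def m_def)
qed

lemma integrable_radial_weight_mult:
  fixes f :: "'a::euclidean_space \<Rightarrow> real" and \<omega> :: "real \<Rightarrow> real"
  assumes "continuous_on UNIV \<omega>" and "Ck 1 f" and "compact_support f"
  shows "integrable lborel (\<lambda>x. \<omega> (norm x - t) * (f x)\<^sup>2)"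
    and "integrable lborel (\<lambda>x. \<omega> (norm x - t) * (radial_deriv f x)\<^sup>2)"
proof -
  obtain \<rho> B where "0 < \<rho>" and f0: "\<And>x. \<rho> \<le> norm x \<Longrightarrow> f x = 0"
    and Df0: "\<And>x. \<rho> \<le> norm x \<Longrightarrow> frechet_derivative f (at x) = (\<lambda>_. 0)"
    and fB: "\<And>x. \<bar>f x\<bar> \<le> B" and DfB: "\<And>x v. \<bar>frechet_derivative f (at x) v\<bar> \<le> B * norm v"
    using C1_compact_support_bounds[OF assms(2,3)] by blast
  have \<omega>_cont: "continuous_on UNIV (\<lambda>x::'a. \<omega> (norm x - t))"
    by (rule continuous_on_compose2[OF assms(1)]) (auto intro!: continuous_intros)
  have "continuous_on UNIV f" using assms(2) by simp
  then have [measurable]: "f \<in> borel_measurable lborel" by (simp add: borel_measurable_continuous_onI)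
  have [measurable]: "radial_deriv f \<in> borel_measurable lborel"
    by (rule C1_radial_deriv_measurable[OF assms(2)])
  have "\<bar>(f x)\<^sup>2\<bar> \<le> B * B" for x unfolding power2_eq_square using fB by (intro abs_mult_le)
  then show "integrable lborel (\<lambda>x. \<omega> (norm x - t) * (f x)\<^sup>2)"
    using f0 by (intro integrable_continuous_mult_vanishing \<omega>_cont) auto
  have "\<bar>(radial_deriv f x)\<^sup>2\<bar> \<le> B * B" for x
    unfolding power2_eq_square using radial_deriv_bound[OF DfB] by (intro abs_mult_le)
  moreover have "radial_deriv f x = 0" if "\<rho> \<le> norm x" for x
    using Df0[OF that] by (simp add: radial_deriv_def)
  ultimately show "integrable lborel (\<lambda>x. \<omega> (norm x - t) * (radial_deriv f x)\<^sup>2)"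
    by (intro integrable_continuous_mult_vanishing \<omega>_cont) auto
qed

lemma weighted_radial_hardy:
  fixes f :: "real^2 \<Rightarrow> real"
  assumes "\<alpha> < 1" and "1 < \<beta>" and "Ck 1 f" and "compact_support f"
  shows "(\<integral>x. weight_w \<alpha> \<beta> (norm x - t) * (f x)\<^sup>2 \<partial>lborel)
    \<le> (2 / weight_gap \<alpha> \<beta>)\<^sup>2 * (\<integral>x. weight_v \<alpha> \<beta> (norm x - t) * (radial_deriv f x)\<^sup>2 \<partial>lborel)"
proof -
  interpret radial_multiplier "multiplier \<alpha> \<beta> t" "multiplier_deriv \<alpha> \<beta> t" t
    by (rule radial_multiplier_weight[OF assms(1,2)])
  note integrable = divergence_terms_integrable[OF assms(3,4), simplified]
  note identity = integral_divergence_identity[OF assms(3,4), simplified]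
  have w_int: "integrable lborel (\<lambda>x. weight_w \<alpha> \<beta> (norm x - t) * (f x)\<^sup>2)"
    by (rule integrable_radial_weight_mult(1)[OF continuous_on_weight_w assms(3,4)])
  have v_int: "integrable lborel (\<lambda>x. weight_v \<alpha> \<beta> (norm x - t) * (radial_deriv f x)\<^sup>2)"
    by (rule integrable_radial_weight_mult(2)[OF continuous_on_weight_v assms(3,4)])
  define L where "L = (\<integral>x. weight_w \<alpha> \<beta> (norm x - t) * (f x)\<^sup>2 \<partial>lborel)"
  define R where "R = (\<integral>x. weight_v \<alpha> \<beta> (norm x - t) * (radial_deriv f x)\<^sup>2 \<partial>lborel)"
  define m where "m = weight_gap \<alpha> \<beta>"
  have "L \<le> (\<integral>x. (norm x * multiplier_deriv \<alpha> \<beta> t (norm x) + 2 * multiplier \<alpha> \<beta> t (norm x)) * (f x)\<^sup>2 \<partial>lborel)"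
    unfolding L_def using w_int integrable(1)
    by (intro integral_mono mult_right_mono weight_w_le_multiplier_divergence assms(1,2)) auto
  also have "\<dots> = (\<integral>x. - 2 * (norm x * multiplier \<alpha> \<beta> t (norm x) * f x * radial_deriv f x) \<partial>lborel)"
    using identity by simp
  also have "\<dots> \<le> (\<integral>x. weight_w \<alpha> \<beta> (norm x - t) * (f x)\<^sup>2 / 2
      + 2 / m\<^sup>2 * (weight_v \<alpha> \<beta> (norm x - t) * (radial_deriv f x)\<^sup>2) \<partial>lborel)"
  proof (rule integral_mono)
    show "integrable lborel (\<lambda>x. weight_w \<alpha> \<beta> (norm x - t) * (f x)\<^sup>2 / 2
        + 2 / m\<^sup>2 * (weight_v \<alpha> \<beta> (norm x - t) * (radial_deriv f x)\<^sup>2))"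
      using w_int v_int by simp
  qed (use integrable(2) multiplier_cross_term_le[OF assms(1,2)] in \<open>simp_all add: m_def mult.assoc\<close>)
  also have "\<dots> = L / 2 + 2 / m\<^sup>2 * R"
    unfolding L_def R_def using w_int v_int by simp
  finally have "L \<le> 4 / m\<^sup>2 * R" by simp
  then show ?thesis by (simp add: L_def R_def m_def power_divide)
qed

theorem proposition1p8:
  fixes \<alpha> \<beta> :: real
  assumes "\<alpha> < 1" and "\<beta> > 1"
  shows "\<exists>C>0. \<forall>(t::real) (f::real^2 \<Rightarrow> real). t \<ge> 0 \<longrightarrow> smooth f \<longrightarrow> compact_support f \<longrightarrow>
     sqrt (\<integral>x. (sqrt (weight_v \<alpha> \<beta> (norm x - t)) / (1 + \<bar>norm x - t\<bar>) * f x)\<^sup>2 \<partial>lborel)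
     \<le> C * sqrt (\<integral>x. (sqrt (weight_v \<alpha> \<beta> (norm x - t)) * radial_deriv f x)\<^sup>2 \<partial>lborel)"
proof (intro exI[of _ "2 / weight_gap \<alpha> \<beta>"] conjI allI impI)
  show "0 < 2 / weight_gap \<alpha> \<beta>" using weight_gap_pos[OF assms] by simp
  fix t :: real and f :: "real^2 \<Rightarrow> real"
  assume "smooth f" and "compact_support f"
  then have "Ck 1 f" by (simp add: smooth_def)
  have lhs: "(sqrt (weight_v \<alpha> \<beta> q) / (1 + \<bar>q\<bar>) * y)\<^sup>2 = weight_w \<alpha> \<beta> q * y\<^sup>2" for q y
    by (simp add: weight_w_def power_mult_distrib power_divide weight_v_nonneg)
  have rhs: "(sqrt (weight_v \<alpha> \<beta> q) * y)\<^sup>2 = weight_v \<alpha> \<beta> q * y\<^sup>2" for q y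
    by (simp add: power_mult_distrib weight_v_nonneg)
  have "sqrt (\<integral>x. weight_w \<alpha> \<beta> (norm x - t) * (f x)\<^sup>2 \<partial>lborel)
      \<le> sqrt ((2 / weight_gap \<alpha> \<beta>)\<^sup>2 * (\<integral>x. weight_v \<alpha> \<beta> (norm x - t) * (radial_deriv f x)\<^sup>2 \<partial>lborel))"
    using weighted_radial_hardy[OF assms \<open>Ck 1 f\<close> \<open>compact_support f\<close>] by (rule real_sqrt_le_mono)
  then show "sqrt (\<integral>x. (sqrt (weight_v \<alpha> \<beta> (norm x - t)) / (1 + \<bar>norm x - t\<bar>) * f x)\<^sup>2 \<partial>lborel)
     \<le> 2 / weight_gap \<alpha> \<beta> * sqrt (\<integral>x. (sqrt (weight_v \<alpha> \<beta> (norm x - t)) * radial_deriv f x)\<^sup>2 \<partial>lborel)"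
    unfolding lhs rhs using weight_gap_pos[OF assms] by (simp add: real_sqrt_mult)
qed

end
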